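(* Let $u$ be a quasi-definite linear functional on $\mathbb C[\boldsymbol x]$, $\boldsymbol\gamma:I\to\mathbb R^D$ a smooth curve on an interval $I\subset\mathbb R$, $w:I\to\mathbb C$ a weight, $v$ the linear functional $\langle v,P\rangle=\int_IP(\boldsymbol\gamma(s))w(s)\,ds$, and $\hat u=u+v$, assumed quasi-definite. Put $\pi_{[m]}(t)=P_{[m]}(\boldsymbol\gamma(t))$, $\hat\pi_{[n]}(t)=\hat P_{[n]}(\boldsymbol\gamma(t))$ and $A_{[l],[m]}=\int_I\pi_{[l]}(s)\pi_{[m]}(s)^\top w(s)\,ds$. Then for $n\ge1$ $$\hat\pi_{[n]}(t)=\Theta_*\begin{pmatrix}H_{[0]}+A_{[0],[0]}&\cdots&A_{[0],[n-1]}&\pi_{[0]}(t)\\ \vdots&\ddots&\vdots&\vdots\\ A_{[n-1],[0]}&\cdots&H_{[n-1]}+A_{[n-1],[n-1]}&\pi_{[n-1]}(t)\\ A_{[n],[0]}&\cdots&A_{[n],[n-1]}&\pi_{[n]}(t)\end{pmatrix},$$ and $$\hat P_{[n]}(\boldsymbol x)=P_{[n]}(\boldsymbol x)-\int_I\hat\pi_{[n]}(s)K_{n-1}(\boldsymbol\gamma(s),\boldsymbol x)w(s)\,ds,\qquad \hat H_{[n]}=H_{[n]}+\int_I\hat\pi_{[n]}(s)\pi_{[n]}(s)^\top w(s)\,ds.$$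
   Context: Multi-indices ordered by graded lexicographic order; $\chi(\boldsymbol x)$ the semi-infinite vector of monomials with blocks $\chi_{[k]}$. For a linear functional $u$ on $\mathbb C[\boldsymbol x]$ (applied entrywise), moment matrix $G=\langle u,\chi\chi^\top\rangle$; quasi-definite: all block truncations nonsingular; then $G=S^{-1}HS^{-\top}$ with $S$ block lower unitriangular and $H$ block diagonal with blocks $H_{[k]}$; $P=S\chi$ with blocks $P_{[k]}$ are the monic orthogonal polynomials; hats refer to $\hat u$. $K_{n-1}(\boldsymbol x,\boldsymbol y)=\sum_{m=0}^{n-1}P_{[m]}(\boldsymbol x)^\top H_{[m]}^{-1}P_{[m]}(\boldsymbol y)$. Last quasi-determinant: $\Theta_*\begin{pmatrix}A&B\\C&D\end{pmatrix}=D-CA^{-1}B$, last block row/column being the last displayed ones. *)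

theory Defs
  imports "HOL-Analysis.Analysis" "Jordan_Normal_Form.Determinant"
begin

text \<open>Multi-indices are lists of naturals of length D. mi D k lists the
multi-indices of total degree k in lexicographic order (x1 > x2 > ... > xD),
so that chi_[k] = (x^alpha) for alpha in mi D k.\<close>

fun mi :: "nat \<Rightarrow> nat \<Rightarrow> nat list list" where
  "mi 0 k = (if k = 0 then [[]] else [])"
| "mi (Suc d) k = concat (map (\<lambda>i. map (Cons (k - i)) (mi d i)) [0..<Suc k])"

definition bsz :: "nat \<Rightarrow> nat \<Rightarrow> nat" where
  "bsz D k = length (mi D k)"

definition madd :: "nat list \<Rightarrow> nat list \<Rightarrow> nat list" where
  "madd a b = map2 (+) a b"

definition monev :: "nat list \<Rightarrow> (nat \<Rightarrow> complex) \<Rightarrow> complex" where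
  "monev a x = (\<Prod>i<length a. x i ^ (a ! i))"

text \<open>Flattened indexing of the blocks 0..n-1: list of (block, local index).\<close>
definition idx :: "nat \<Rightarrow> nat \<Rightarrow> (nat \<times> nat) list" where
  "idx D n = concat (map (\<lambda>k. map (\<lambda>a. (k, a)) [0..<bsz D k]) [0..<n])"

definition off :: "nat \<Rightarrow> nat \<Rightarrow> nat" where
  "off D n = (\<Sum>k<n. bsz D k)"

text \<open>A linear functional on C[x] is determined by its moments mom alpha = <u, x^alpha>.\<close>

definition Gblk :: "(nat list \<Rightarrow> complex) \<Rightarrow> nat \<Rightarrow> nat \<Rightarrow> nat \<Rightarrow> complex mat" where
  "Gblk mom D k l = mat (bsz D k) (bsz D l)
      (\<lambda>(a, b). mom (madd (mi D k ! a) (mi D l ! b)))"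

text \<open>Block truncation G_[0..n] (blocks 0..n).\<close>
definition Gtrunc :: "(nat list \<Rightarrow> complex) \<Rightarrow> nat \<Rightarrow> nat \<Rightarrow> complex mat" where
  "Gtrunc mom D n = mat (off D (Suc n)) (off D (Suc n))
      (\<lambda>(r, c). case idx D (Suc n) ! r of (k, a) \<Rightarrow>
                 (case idx D (Suc n) ! c of (l, b) \<Rightarrow>
                    mom (madd (mi D k ! a) (mi D l ! b))))"

definition quasi_definite :: "(nat list \<Rightarrow> complex) \<Rightarrow> nat \<Rightarrow> bool" where
  "quasi_definite mom D \<longleftrightarrow> (\<forall>n. det (Gtrunc mom D n) \<noteq> 0)"

text \<open>G = S^{-1} H S^{-T} with S block lower unitriangular (blocks S k j, j \<le> k,
S k k = identity) and H block diagonal (blocks H k); equivalently S G S^T = H,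
written blockwise/entrywise.\<close>
definition block_LDL ::
  "(nat list \<Rightarrow> complex) \<Rightarrow> nat \<Rightarrow> (nat \<Rightarrow> nat \<Rightarrow> complex mat) \<Rightarrow> (nat \<Rightarrow> complex mat) \<Rightarrow> bool" where
  "block_LDL mom D S H \<longleftrightarrow>
     (\<forall>k. S k k = 1\<^sub>m (bsz D k)) \<and>
     (\<forall>k j. j \<le> k \<longrightarrow> S k j \<in> carrier_mat (bsz D k) (bsz D j)) \<and>
     (\<forall>k. H k \<in> carrier_mat (bsz D k) (bsz D k)) \<and>
     (\<forall>k l a b. a < bsz D k \<longrightarrow> b < bsz D l \<longrightarrow>
        (\<Sum>i\<le>k. \<Sum>j\<le>l. \<Sum>c<bsz D i. \<Sum>d<bsz D j.
            S k i $$ (a, c) * Gblk mom D i j $$ (c, d) * S l j $$ (b, d))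
        = (if k = l then H k $$ (a, b) else 0))"

text \<open>P_[k](x) = sum_{j \<le> k} S_[k],[j] chi_[j](x), as a column (bsz D k x 1 matrix).\<close>
definition Pb :: "nat \<Rightarrow> (nat \<Rightarrow> nat \<Rightarrow> complex mat) \<Rightarrow> nat \<Rightarrow> (nat \<Rightarrow> complex) \<Rightarrow> complex mat" where
  "Pb D S k x = mat (bsz D k) 1
      (\<lambda>(a, _). \<Sum>j\<le>k. \<Sum>b<bsz D j. S k j $$ (a, b) * monev (mi D j ! b) x)"

definition mat_inv :: "complex mat \<Rightarrow> complex mat" where
  "mat_inv A = (1 / det A) \<cdot>\<^sub>m adj_mat A"

text \<open>Christoffel--Darboux kernel K_{n-1}(y,x) = sum_{m<n} P_[m](y)^T H_[m]^{-1} P_[m](x).\<close>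
definition Kern :: "nat \<Rightarrow> (nat \<Rightarrow> nat \<Rightarrow> complex mat) \<Rightarrow> (nat \<Rightarrow> complex mat) \<Rightarrow> nat
     \<Rightarrow> (nat \<Rightarrow> complex) \<Rightarrow> (nat \<Rightarrow> complex) \<Rightarrow> complex" where
  "Kern D S H n y x = (\<Sum>m<n. (transpose_mat (Pb D S m y) * mat_inv (H m) * Pb D S m x) $$ (0, 0))"

text \<open>Theta_star M p q = D - C A^{-1} B, where the last block row of M has p rows
and the last block column has q columns.\<close>
definition Theta_star :: "complex mat \<Rightarrow> nat \<Rightarrow> nat \<Rightarrow> complex mat" where
  "Theta_star M p q = (case split_block M (dim_row M - p) (dim_col M - q) of
      (A, B, C, Dm) \<Rightarrow> Dm - C * mat_inv A * B)"

definition smooth_curve :: "nat \<Rightarrow> real set \<Rightarrow> (real \<Rightarrow> nat \<Rightarrow> real) \<Rightarrow> bool" where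
  "smooth_curve D I \<gamma> \<longleftrightarrow>
     (\<forall>i<D. \<forall>k. \<forall>s\<in>I. ((deriv ^^ k) (\<lambda>r. \<gamma> r i)) differentiable (at s))"

definition cpt :: "(real \<Rightarrow> nat \<Rightarrow> real) \<Rightarrow> real \<Rightarrow> nat \<Rightarrow> complex" where
  "cpt \<gamma> s = (\<lambda>i. complex_of_real (\<gamma> s i))"

end

theory Submission
  imports Defs
begin

text \<open>
The perturbed polynomial block \<open>\<hat>P\<^sub>n\<close> and \<open>P\<^sub>n\<close> are both monic, so
\<open>\<hat>P\<^sub>n = P\<^sub>n + \<Sum>\<^sub>m\<^sub><\<^sub>n X\<^sub>m P\<^sub>m\<close>. Orthogonality of \<open>\<hat>P\<^sub>n\<close> to \<open>P\<^sub>m\<close>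
(\<open>m < n\<close>) with respect to \<open>\<hat>u = u + v\<close> reads \<open>C + X A = 0\<close>, where \<open>A\<close> is the
\<open>\<hat>u\<close>-Gram matrix of \<open>P\<^sub>0, \<dots>, P\<^sub>n\<^sub>-\<^sub>1\<close> (the blocks \<open>\<delta> H + A\<close> of the bordered
matrix), which is invertible because \<open>\<hat>u\<close> is quasi-definite; solving for \<open>X\<close> gives the
quasi-determinant. Splitting the same relation into its \<open>u\<close>- and \<open>v\<close>-parts and using
the \<open>u\<close>-orthogonality of the \<open>P\<^sub>m\<close> gives instead
\<open>X\<^sub>m H\<^sub>m = -\<langle>v, \<hat>P\<^sub>n P\<^sub>m\<^sup>T\<rangle>\<close>, which is the kernel formula. Finally
\<open>\<hat>H\<^sub>n = \<langle>\<hat>u, \<hat>P\<^sub>n \<hat>P\<^sub>n\<^sup>T\<rangle> = \<langle>\<hat>u, \<hat>P\<^sub>n P\<^sub>n\<^sup>T\<rangle>\<close>, and the \<open>u\<close>-part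
of the last pairing is \<open>H\<^sub>n\<close>.
\<close>

section \<open>Coefficient vectors and unitriangular families\<close>

text \<open>A polynomial of degree \<open>< m\<close> is represented by its coefficient vector, a function
on the pairs \<open>(k, a)\<close> with \<open>k < m\<close>, \<open>a < bsz D k\<close>, where \<open>(k, a)\<close> stands for the
\<open>a\<close>-th monomial of \<open>\<chi>\<^sub>[\<^sub>k\<^sub>]\<close>.\<close>

definition block_index :: "nat \<Rightarrow> nat \<Rightarrow> (nat \<times> nat) set" where
  "block_index D m = Sigma {..<m} (\<lambda>k. {..<bsz D k})"

definition supported :: "nat \<Rightarrow> nat \<Rightarrow> (nat \<times> nat \<Rightarrow> complex) \<Rightarrow> bool" where
  "supported D m p \<longleftrightarrow> (\<forall>i. p i \<noteq> 0 \<longrightarrow> i \<in> block_index D m)"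

definition lincomb :: "nat \<Rightarrow> nat \<Rightarrow> (nat \<times> nat \<Rightarrow> complex) \<Rightarrow> (nat \<times> nat \<Rightarrow> nat \<times> nat \<Rightarrow> complex)
    \<Rightarrow> nat \<times> nat \<Rightarrow> complex" where
  "lincomb D m x t = (\<lambda>i. \<Sum>j\<in>block_index D m. x j * t j i)"

definition unitriangular :: "nat \<Rightarrow> (nat \<times> nat \<Rightarrow> nat \<times> nat \<Rightarrow> complex) \<Rightarrow> bool" where
  "unitriangular D t \<longleftrightarrow> (\<forall>k a. a < bsz D k \<longrightarrow> supported D (Suc k) (t (k, a)) \<and>
      (\<forall>b<bsz D k. t (k, a) (k, b) = (if a = b then 1 else 0)))"

lemma finite_block_index [simp]: "finite (block_index D m)"
  unfolding block_index_def by auto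

lemma mem_block_index [simp]: "(k, b) \<in> block_index D m \<longleftrightarrow> k < m \<and> b < bsz D k"
  unfolding block_index_def by auto

lemma mem_block_index_iff: "i \<in> block_index D m \<longleftrightarrow> fst i < m \<and> snd i < bsz D (fst i)"
  by (cases i) simp

lemma block_index_0 [simp]: "block_index D 0 = {}"
  unfolding block_index_def by auto

lemma sum_block_index: "(\<Sum>i\<in>block_index D m. f i) = (\<Sum>k<m. \<Sum>a<bsz D k. f (k, a))"
  unfolding block_index_def by (subst sum.Sigma) auto

lemma sum_block_index_Suc:
  "(\<Sum>i\<in>block_index D (Suc m). f i) = (\<Sum>i\<in>block_index D m. f i) + (\<Sum>a<bsz D m. f (m, a))"
  by (simp add: sum_block_index)

lemma block_index_mono: "m \<le> m' \<Longrightarrow> block_index D m \<subseteq> block_index D m'"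
  by (auto simp: block_index_def)

lemma lincomb_Suc:
  "lincomb D (Suc m) x t i = lincomb D m x t i + (\<Sum>a<bsz D m. x (m, a) * t (m, a) i)"
  unfolding lincomb_def by (rule sum_block_index_Suc)

lemma supported_lincomb:
  "(\<And>j. j \<in> block_index D m \<Longrightarrow> supported D m (t j)) \<Longrightarrow> supported D m (lincomb D m x t)"
  unfolding supported_def lincomb_def by (metis (mono_tags, lifting) mult_zero_right sum.neutral)

lemma unitriangular_supported:
  assumes "unitriangular D t" and "j \<in> block_index D m"
  shows "supported D m (t j)"
proof -
  obtain k a where j: "j = (k, a)" by fastforce
  with assms have "supported D (Suc k) (t j)" "Suc k \<le> m"
    unfolding unitriangular_def by auto
  then show ?thesis
    using block_index_mono unfolding supported_def by blast
qed

text \<open>Elimination from the top block down: subtracting the \<open>t (m, a)\<close> with the top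
coefficients of \<open>p\<close> leaves a vector supported below block \<open>m\<close>.\<close>

lemma unitriangular_span:
  assumes ut: "unitriangular D t"
  shows "supported D m p \<Longrightarrow> \<exists>x. p = lincomb D m x t"
proof (induction m arbitrary: p)
  case 0
  then have "p = (\<lambda>_. 0)" unfolding supported_def by auto
  then show ?case by (intro exI[of _ "\<lambda>_. 0"]) (auto simp: lincomb_def)
next
  case (Suc m)
  define p' where "p' = (\<lambda>i. p i - (\<Sum>a<bsz D m. p (m, a) * t (m, a) i))"
  have "supported D m p'"
    unfolding supported_def
  proof (intro allI impI, rule ccontr)
    fix i assume nz: "p' i \<noteq> 0" and ni: "i \<notin> block_index D m"
    obtain k b where i: "i = (k, b)" by fastforce
    show False
    proof (cases "i \<in> block_index D (Suc m)")
      case False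
      then have "p i = 0" using Suc.prems unfolding supported_def by blast
      moreover have "t (m, a) i = 0" if "a < bsz D m" for a
        using ut that False unfolding unitriangular_def supported_def by blast
      ultimately show False using nz unfolding p'_def by simp
    next
      case True
      with ni i have k: "k = m" "b < bsz D m" by (auto simp: less_Suc_eq)
      have "(\<Sum>a<bsz D m. p (m, a) * t (m, a) i) = (\<Sum>a<bsz D m. if a = b then p (m, a) else 0)"
        using ut k unfolding unitriangular_def i by (intro sum.cong) auto
      also have "\<dots> = p i" using k i by simp
      finally show False using nz unfolding p'_def by simp
    qed
  qed
  then obtain x where x: "p' = lincomb D m x t" using Suc.IH by blast
  define x' where "x' = (\<lambda>i. if fst i = m then p i else x i)"
  have "lincomb D m x' t i = lincomb D m x t i" for i
    unfolding lincomb_def x'_def by (intro sum.cong) auto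
  then have "lincomb D (Suc m) x' t = p"
    by (simp add: fun_eq_iff lincomb_Suc x'_def flip: x) (simp add: p'_def)
  then show ?case by blast
qed

lemma unitriangular_independent:
  assumes ut: "unitriangular D t"
  shows "lincomb D m x t = (\<lambda>_. 0) \<Longrightarrow> i \<in> block_index D m \<Longrightarrow> x i = 0"
proof (induction m arbitrary: i)
  case 0
  then show ?case by simp
next
  case (Suc m)
  have top: "x (m, b) = 0" if b: "b < bsz D m" for b
  proof -
    have "t j (m, b) = 0" if "j \<in> block_index D m" for j
      using unitriangular_supported[OF ut that] unfolding supported_def by auto
    then have "lincomb D m x t (m, b) = 0"
      unfolding lincomb_def by simp
    moreover have "(\<Sum>a<bsz D m. x (m, a) * t (m, a) (m, b)) = (\<Sum>a<bsz D m. if a = b then x (m, a) else 0)"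
      using ut b unfolding unitriangular_def by (intro sum.cong) auto
    moreover have "lincomb D (Suc m) x t (m, b) = 0" using Suc.prems by simp
    ultimately show ?thesis using b unfolding lincomb_Suc by simp
  qed
  have "lincomb D m x t = (\<lambda>_. 0)"
  proof
    fix j
    have "lincomb D (Suc m) x t j = 0" using Suc.prems by simp
    then show "lincomb D m x t j = 0" unfolding lincomb_Suc using top by simp
  qed
  then show ?case using Suc top by (cases i) (auto simp: less_Suc_eq)
qed

section \<open>Bilinear forms of moment functionals\<close>

definition monomial :: "nat \<Rightarrow> nat \<times> nat \<Rightarrow> nat list" where
  "monomial D i = mi D (fst i) ! snd i"

definition gram :: "(nat list \<Rightarrow> complex) \<Rightarrow> nat \<Rightarrow> nat \<times> nat \<Rightarrow> nat \<times> nat \<Rightarrow> complex" where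
  "gram mom D i j = mom (madd (monomial D i) (monomial D j))"

definition bilin :: "nat \<Rightarrow> nat \<Rightarrow> (nat \<times> nat \<Rightarrow> nat \<times> nat \<Rightarrow> complex) \<Rightarrow> (nat \<times> nat \<Rightarrow> complex)
    \<Rightarrow> (nat \<times> nat \<Rightarrow> complex) \<Rightarrow> complex" where
  "bilin D N g p q = (\<Sum>i\<in>block_index D N. \<Sum>j\<in>block_index D N. p i * g i j * q j)"

text \<open>\<open>Srow D S (k, a)\<close> is the coefficient vector of the \<open>a\<close>-th entry of
\<open>P\<^sub>[\<^sub>k\<^sub>] = \<Sum>\<^sub>j\<^sub>\<le>\<^sub>k S\<^sub>[\<^sub>k\<^sub>]\<^sub>,\<^sub>[\<^sub>j\<^sub>] \<chi>\<^sub>[\<^sub>j\<^sub>]\<close>.\<close>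

definition Srow :: "nat \<Rightarrow> (nat \<Rightarrow> nat \<Rightarrow> complex mat) \<Rightarrow> nat \<times> nat \<Rightarrow> nat \<times> nat \<Rightarrow> complex" where
  "Srow D S ka jb = (if fst jb \<le> fst ka \<and> snd jb < bsz D (fst jb)
      then S (fst ka) (fst jb) $$ (snd ka, snd jb) else 0)"

lemma bilin_lincomb_left:
  "bilin D N g (lincomb D m x t) q = (\<Sum>j\<in>block_index D m. x j * bilin D N g (t j) q)"
proof -
  have "bilin D N g (lincomb D m x t) q =
      (\<Sum>i\<in>block_index D N. \<Sum>k\<in>block_index D N. \<Sum>j\<in>block_index D m. x j * (t j i * g i k * q k))"
    unfolding bilin_def lincomb_def
    by (simp add: sum_distrib_right sum_distrib_left mult.assoc mult.left_commute)
  also have "\<dots> = (\<Sum>j\<in>block_index D m. \<Sum>i\<in>block_index D N. \<Sum>k\<in>block_index D N. x j * (t j i * g i k * q k))"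
    by (subst sum.swap, rule sum.cong[OF refl], rule sum.swap)
  also have "\<dots> = (\<Sum>j\<in>block_index D m. x j * bilin D N g (t j) q)"
    unfolding bilin_def by (simp add: sum_distrib_left)
  finally show ?thesis .
qed

lemma bilin_lincomb_right:
  "bilin D N g p (lincomb D m x t) = (\<Sum>j\<in>block_index D m. x j * bilin D N g p (t j))"
proof -
  have "bilin D N g p (lincomb D m x t) =
      (\<Sum>i\<in>block_index D N. \<Sum>k\<in>block_index D N. \<Sum>j\<in>block_index D m. x j * (p i * g i k * t j k))"
    unfolding bilin_def lincomb_def
    by (simp add: sum_distrib_right sum_distrib_left mult.assoc mult.left_commute)
  also have "\<dots> = (\<Sum>j\<in>block_index D m. \<Sum>i\<in>block_index D N. \<Sum>k\<in>block_index D N. x j * (p i * g i k * t j k))"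
    by (subst sum.swap, rule sum.cong[OF refl], rule sum.swap)
  also have "\<dots> = (\<Sum>j\<in>block_index D m. x j * bilin D N g p (t j))"
    unfolding bilin_def by (simp add: sum_distrib_left)
  finally show ?thesis .
qed

lemma bilin_add_form: "bilin D N (\<lambda>i j. g i j + g' i j) p q = bilin D N g p q + bilin D N g' p q"
  unfolding bilin_def by (simp add: algebra_simps sum.distrib)

lemma bilin_add_left: "bilin D N g (\<lambda>i. p i + p' i) q = bilin D N g p q + bilin D N g p' q"
  unfolding bilin_def by (simp add: algebra_simps sum.distrib)

lemma bilin_add_right: "bilin D N g p (\<lambda>i. q i + q' i) = bilin D N g p q + bilin D N g p q'"
  unfolding bilin_def by (simp add: algebra_simps sum.distrib)

lemma gram_add: "gram (\<lambda>\<alpha>. f \<alpha> + f' \<alpha>) D = (\<lambda>i j. gram f D i j + gram f' D i j)"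
  unfolding gram_def by (simp add: fun_eq_iff)

lemma supported_Srow: "fst j < m \<Longrightarrow> supported D m (Srow D S j)"
  unfolding supported_def Srow_def by (cases j) auto

lemma unitriangular_Srow:
  assumes "block_LDL mom D S H"
  shows "unitriangular D (Srow D S)"
  using assms unfolding unitriangular_def block_LDL_def by (auto intro: supported_Srow simp: Srow_def)

lemma sum_lessThan_truncate:
  assumes "(k::nat) < N" "\<And>i. k < i \<Longrightarrow> i < N \<Longrightarrow> f i = 0"
  shows "(\<Sum>i<N. f i) = (\<Sum>i\<le>k. f i)"
  by (rule sum.mono_neutral_right) (use assms in auto)

lemma block_LDL_bilin:
  assumes L: "block_LDL mom D S H" and k: "k < N" and l: "l < N" and a: "a < bsz D k" and b: "b < bsz D l"
  shows "bilin D N (gram mom D) (Srow D S (k, a)) (Srow D S (l, b)) = (if k = l then H k $$ (a, b) else 0)"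
proof -
  let ?f = "\<lambda>i j c d. Srow D S (k, a) (i, c) * gram mom D (i, c) (j, d) * Srow D S (l, b) (j, d)"
  have "bilin D N (gram mom D) (Srow D S (k, a)) (Srow D S (l, b)) =
      (\<Sum>i<N. \<Sum>c<bsz D i. \<Sum>j<N. \<Sum>d<bsz D j. ?f i j c d)"
    unfolding bilin_def sum_block_index by (simp add: sum_distrib_left)
  also have "\<dots> = (\<Sum>i<N. \<Sum>j<N. \<Sum>c<bsz D i. \<Sum>d<bsz D j. ?f i j c d)"
    by (intro sum.cong refl sum.swap)
  also have "\<dots> = (\<Sum>i\<le>k. \<Sum>j<N. \<Sum>c<bsz D i. \<Sum>d<bsz D j. ?f i j c d)"
    by (rule sum_lessThan_truncate[OF k]) (simp add: Srow_def)
  also have "\<dots> = (\<Sum>i\<le>k. \<Sum>j\<le>l. \<Sum>c<bsz D i. \<Sum>d<bsz D j. ?f i j c d)"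
    by (intro sum.cong refl sum_lessThan_truncate[OF l]) (simp add: Srow_def)
  also have "\<dots> = (\<Sum>i\<le>k. \<Sum>j\<le>l. \<Sum>c<bsz D i. \<Sum>d<bsz D j.
            S k i $$ (a, c) * Gblk mom D i j $$ (c, d) * S l j $$ (b, d))"
    by (intro sum.cong refl) (simp add: Srow_def Gblk_def gram_def monomial_def)
  also have "\<dots> = (if k = l then H k $$ (a, b) else 0)"
    using L a b unfolding block_LDL_def by blast
  finally show ?thesis .
qed

section \<open>Quasi-definiteness and nondegeneracy\<close>

lemma idx_Suc: "idx D (Suc n) = idx D n @ map (\<lambda>a. (n, a)) [0..<bsz D n]"
  unfolding idx_def by simp

lemma off_Suc: "off D (Suc m) = off D m + bsz D m"
  unfolding off_def by simp

lemma length_idx [simp]: "length (idx D n) = off D n"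
  by (induction n) (simp_all add: idx_Suc off_Suc, simp add: idx_def off_def)

lemma set_idx: "set (idx D n) = block_index D n"
  by (induction n) (auto simp: idx_Suc mem_block_index_iff less_Suc_eq, auto simp: idx_def)

lemma distinct_idx: "distinct (idx D n)"
proof (induction n)
  case 0
  then show ?case by (simp add: idx_def)
next
  case (Suc n)
  have "set (idx D n) \<inter> set (map (\<lambda>a. (n, a)) [0..<bsz D n]) = {}"
    unfolding set_idx by (auto simp: block_index_def)
  then show ?case using Suc by (simp add: idx_Suc distinct_map inj_on_def)
qed

lemma idx_Suc_low: "r < off D n \<Longrightarrow> idx D (Suc n) ! r = idx D n ! r"
  by (simp add: idx_Suc nth_append)

lemma idx_Suc_top: "a < bsz D n \<Longrightarrow> idx D (Suc n) ! (off D n + a) = (n, a)"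
  by (simp add: idx_Suc nth_append)

lemma bij_betw_idx: "bij_betw ((!) (idx D n)) {..<off D n} (block_index D n)"
  by (rule bij_betw_nth) (auto simp: distinct_idx set_idx)

lemma sum_idx: "(\<Sum>r<off D n. f (idx D n ! r)) = (\<Sum>i\<in>block_index D n. f i)"
  by (rule sum.reindex_bij_betw[OF bij_betw_idx])

lemma idx_in_block_index: "r < off D n \<Longrightarrow> idx D n ! r \<in> block_index D n"
  using bij_betw_idx bij_betwE by blast

lemma block_index_idx: "i \<in> block_index D n \<Longrightarrow> \<exists>r<off D n. idx D n ! r = i"
  by (metis in_set_conv_nth length_idx set_idx)

lemma Gtrunc_entry:
  "r < off D (Suc m) \<Longrightarrow> c < off D (Suc m) \<Longrightarrow>
   Gtrunc mom D m $$ (r, c) = gram mom D (idx D (Suc m) ! r) (idx D (Suc m) ! c)"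
  unfolding Gtrunc_def gram_def monomial_def by (simp split: prod.split)

lemma quasi_definite_gram_kernel:
  assumes qd: "quasi_definite mom D" and sp: "supported D (Suc m) p"
    and ker: "\<And>i. i \<in> block_index D (Suc m) \<Longrightarrow> (\<Sum>j\<in>block_index D (Suc m). gram mom D i j * p j) = 0"
  shows "p = (\<lambda>_. 0)"
proof -
  let ?n = "off D (Suc m)" and ?G = "Gtrunc mom D m" and ?ix = "idx D (Suc m)"
  define v where "v = vec ?n (\<lambda>c. p (?ix ! c))"
  have G: "?G \<in> carrier_mat ?n ?n" unfolding Gtrunc_def by simp
  have "?G *\<^sub>v v = 0\<^sub>v ?n"
  proof (rule eq_vecI)
    fix r assume "r < dim_vec (0\<^sub>v ?n :: complex vec)"
    then have r: "r < ?n" by simp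
    have "(?G *\<^sub>v v) $ r = (\<Sum>c<?n. gram mom D (?ix ! r) (?ix ! c) * p (?ix ! c))"
      using G r unfolding v_def by (simp add: mult_mat_vec_def scalar_prod_def Gtrunc_entry atLeast0LessThan)
    also have "\<dots> = (\<Sum>j\<in>block_index D (Suc m). gram mom D (?ix ! r) j * p j)"
      by (rule sum_idx)
    also have "\<dots> = 0"
      by (rule ker[OF idx_in_block_index[OF r]])
    finally show "(?G *\<^sub>v v) $ r = 0\<^sub>v ?n $ r" using r by simp
  qed (use G in simp)
  moreover have "det ?G \<noteq> 0" using qd unfolding quasi_definite_def by blast
  moreover have "v \<in> carrier_vec ?n" unfolding v_def by simp
  ultimately have v0: "v = 0\<^sub>v ?n"
    using det_0_iff_vec_prod_zero_field[OF G] by blast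
  show ?thesis
  proof
    fix i
    show "p i = 0"
    proof (cases "i \<in> block_index D (Suc m)")
      case True
      then obtain r where r: "r < ?n" "?ix ! r = i" using block_index_idx by blast
      have "v $ r = 0" using v0 r by simp
      then show ?thesis using r unfolding v_def by simp
    next
      case False
      then show ?thesis using sp unfolding supported_def by blast
    qed
  qed
qed

definition delta :: "nat \<times> nat \<Rightarrow> nat \<times> nat \<Rightarrow> complex" where
  "delta i = (\<lambda>j. if j = i then 1 else 0)"

lemma bilin_delta_left:
  "i \<in> block_index D N \<Longrightarrow> bilin D N g (delta i) p = (\<Sum>j\<in>block_index D N. g i j * p j)"
  unfolding bilin_def delta_def by (simp add: if_distrib if_distribR sum.If_cases Int_absorb2 cong: if_cong)

lemma supported_delta: "i \<in> block_index D m \<Longrightarrow> supported D m (delta i)"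
  unfolding supported_def delta_def by auto

lemma bilin_orthogonal_span_right:
  assumes "unitriangular D t" and "supported D m q"
    and "\<And>j. j \<in> block_index D m \<Longrightarrow> bilin D N g p (t j) = 0"
  shows "bilin D N g p q = 0"
proof -
  obtain x where "q = lincomb D m x t" using unitriangular_span assms(1,2) by blast
  then show ?thesis using assms(3) by (simp add: bilin_lincomb_right)
qed

lemma bilin_orthogonal_span_left:
  assumes "unitriangular D t" and "supported D m q"
    and "\<And>j. j \<in> block_index D m \<Longrightarrow> bilin D N g (t j) p = 0"
  shows "bilin D N g q p = 0"
proof -
  obtain x where "q = lincomb D m x t" using unitriangular_span assms(1,2) by blast
  then show ?thesis using assms(3) by (simp add: bilin_lincomb_left)
qed

lemma quasi_definite_nondegenerate:
  assumes qd: "quasi_definite mom D" and ut: "unitriangular D t" and mN: "m \<le> N"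
    and sp: "supported D m p"
    and orth: "\<And>i. i \<in> block_index D m \<Longrightarrow> bilin D N (gram mom D) (t i) p = 0"
  shows "p = (\<lambda>_. 0)"
proof (cases m)
  case 0
  then show ?thesis using sp by (auto simp: supported_def)
next
  case (Suc m')
  show ?thesis
  proof (rule quasi_definite_gram_kernel[OF qd])
    show "supported D (Suc m') p" using sp Suc by simp
    fix i assume i: "i \<in> block_index D (Suc m')"
    have sub: "block_index D m \<subseteq> block_index D N" by (rule block_index_mono[OF mN])
    have "bilin D N (gram mom D) (delta i) p = 0"
      using i Suc by (intro bilin_orthogonal_span_left[OF ut supported_delta] orth) auto
    then have "(\<Sum>j\<in>block_index D N. gram mom D i j * p j) = 0"
      using i Suc sub by (auto simp: bilin_delta_left)
    moreover have "(\<Sum>j\<in>block_index D N. gram mom D i j * p j) = (\<Sum>j\<in>block_index D m. gram mom D i j * p j)"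
      using sp sub by (intro sum.mono_neutral_right) (auto simp: supported_def)
    ultimately show "(\<Sum>j\<in>block_index D (Suc m'). gram mom D i j * p j) = 0" using Suc by simp
  qed
qed

lemma quasi_definite_orthogonal_lincomb:
  assumes qd: "quasi_definite mom D" and ut: "unitriangular D t" and mN: "m \<le> N"
    and orth: "\<And>i. i \<in> block_index D m \<Longrightarrow> bilin D N (gram mom D) (t i) (lincomb D m x t) = 0"
    and j: "j \<in> block_index D m"
  shows "x j = 0"
proof -
  have "supported D m (lincomb D m x t)"
    by (intro supported_lincomb unitriangular_supported[OF ut])
  then have "lincomb D m x t = (\<lambda>_. 0)"
    using quasi_definite_nondegenerate[OF qd ut mN _ orth] by blast
  then show ?thesis using unitriangular_independent[OF ut _ j] by blast
qed

lemma det_gram_lincomb_nonzero: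
  assumes qd: "quasi_definite mom D" and ut: "unitriangular D t" and mN: "m \<le> N"
  shows "det (mat (off D m) (off D m)
           (\<lambda>(r, c). bilin D N (gram mom D) (t (idx D m ! r)) (t (idx D m ! c)))) \<noteq> 0"
    (is "det ?A \<noteq> 0")
proof
  let ?o = "off D m" and ?ix = "idx D m"
  have A: "?A \<in> carrier_mat ?o ?o" by simp
  assume "det ?A = 0"
  then obtain v where v: "v \<in> carrier_vec ?o" "v \<noteq> 0\<^sub>v ?o" "?A *\<^sub>v v = 0\<^sub>v ?o"
    using det_0_iff_vec_prod_zero_field[OF A] by blast
  define pos where "pos = the_inv_into {..<?o} ((!) ?ix)"
  have pos: "pos (?ix ! r) = r" if "r < ?o" for r
    unfolding pos_def using bij_betw_idx that by (simp add: bij_betw_def the_inv_into_f_f)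
  define x where "x = (\<lambda>i. v $ pos i)"
  have "bilin D N (gram mom D) (t i) (lincomb D m x t) = 0" if i: "i \<in> block_index D m" for i
  proof -
    obtain r0 where r0: "r0 < ?o" "?ix ! r0 = i" using block_index_idx[OF i] by blast
    have "bilin D N (gram mom D) (t i) (lincomb D m x t) =
        (\<Sum>j\<in>block_index D m. x j * bilin D N (gram mom D) (t i) (t j))"
      by (rule bilin_lincomb_right)
    also have "\<dots> = (\<Sum>r<?o. x (?ix ! r) * bilin D N (gram mom D) (t i) (t (?ix ! r)))"
      by (rule sum_idx[symmetric])
    also have "\<dots> = (?A *\<^sub>v v) $ r0"
      using r0 v(1) by (simp add: x_def pos scalar_prod_def atLeast0LessThan mult.commute)
    finally show ?thesis using v(3) r0 by simp
  qed
  then have "x j = 0" if "j \<in> block_index D m" for j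
    using quasi_definite_orthogonal_lincomb[OF qd ut mN _ that] by blast
  then have "v $ r = 0" if "r < ?o" for r
    using idx_in_block_index[OF that] pos[OF that] unfolding x_def by metis
  then have "v = 0\<^sub>v ?o" using v(1) by (intro eq_vecI) auto
  with v(2) show False by simp
qed

section \<open>Evaluation and integrals along the curve\<close>

definition poly_eval :: "nat \<Rightarrow> nat \<Rightarrow> (nat \<times> nat \<Rightarrow> complex) \<Rightarrow> (nat \<Rightarrow> complex) \<Rightarrow> complex" where
  "poly_eval D N p x = (\<Sum>i\<in>block_index D N. p i * monev (monomial D i) x)"

definition curve_moment :: "real set \<Rightarrow> (real \<Rightarrow> nat \<Rightarrow> real) \<Rightarrow> (real \<Rightarrow> complex) \<Rightarrow> nat list \<Rightarrow> complex" where
  "curve_moment I \<gamma> w \<alpha> = (LINT s:I|lborel. monev \<alpha> (cpt \<gamma> s) * w s)"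

lemma poly_eval_add: "poly_eval D N (\<lambda>i. p i + q i) x = poly_eval D N p x + poly_eval D N q x"
  unfolding poly_eval_def by (simp add: algebra_simps sum.distrib)

lemma poly_eval_lincomb:
  "poly_eval D N (lincomb D m y t) x = (\<Sum>j\<in>block_index D m. y j * poly_eval D N (t j) x)"
  unfolding poly_eval_def lincomb_def
  by (simp add: sum_distrib_left sum_distrib_right mult.assoc) (rule sum.swap)

lemma dim_Pb [simp]: "dim_row (Pb D S k x) = bsz D k" "dim_col (Pb D S k x) = 1"
  unfolding Pb_def by simp_all

lemma Pb_eq_poly_eval:
  assumes k: "k < N" and a: "a < bsz D k"
  shows "Pb D S k x $$ (a, 0) = poly_eval D N (Srow D S (k, a)) x"
proof -
  have "poly_eval D N (Srow D S (k, a)) x = (\<Sum>j<N. \<Sum>b<bsz D j. Srow D S (k, a) (j, b) * monev (mi D j ! b) x)"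
    unfolding poly_eval_def sum_block_index monomial_def by simp
  also have "\<dots> = (\<Sum>j\<le>k. \<Sum>b<bsz D j. Srow D S (k, a) (j, b) * monev (mi D j ! b) x)"
    by (rule sum_lessThan_truncate[OF k]) (simp add: Srow_def)
  also have "\<dots> = Pb D S k x $$ (a, 0)"
    unfolding Pb_def using a by (simp add: Srow_def)
  finally show ?thesis ..
qed

lemma length_mi: "l \<in> set (mi d k) \<Longrightarrow> length l = d"
  by (induction d arbitrary: k l) (auto split: if_splits)

lemma length_monomial: "i \<in> block_index D N \<Longrightarrow> length (monomial D i) = D"
  unfolding monomial_def by (rule length_mi[of _ D "fst i"]) (auto simp: block_index_def bsz_def)

lemma monev_madd: "length \<alpha> = length \<beta> \<Longrightarrow> monev (madd \<alpha> \<beta>) x = monev \<alpha> x * monev \<beta> x"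
  unfolding monev_def madd_def by (simp add: power_add prod.distrib)

lemma set_integrable_sum:
  fixes f :: "'i \<Rightarrow> 'a \<Rightarrow> 'b::{banach, second_countable_topology}"
  assumes "finite K" "\<And>k. k \<in> K \<Longrightarrow> set_integrable M A (f k)"
  shows "set_integrable M A (\<lambda>s. \<Sum>k\<in>K. f k s)"
proof -
  have e: "(\<lambda>x. indicator A x *\<^sub>R (\<Sum>k\<in>K. f k x)) = (\<lambda>x. \<Sum>k\<in>K. indicator A x *\<^sub>R f k x)"
    by (simp add: scaleR_sum_right)
  show ?thesis
    using assms unfolding set_integrable_def e by (intro Bochner_Integration.integrable_sum) auto
qed

lemma set_integral_sum:
  fixes f :: "'i \<Rightarrow> 'a \<Rightarrow> 'b::{banach, second_countable_topology}"
  assumes "finite K" "\<And>k. k \<in> K \<Longrightarrow> set_integrable M A (f k)"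
  shows "(LINT s:A|M. (\<Sum>k\<in>K. f k s)) = (\<Sum>k\<in>K. LINT s:A|M. f k s)"
proof -
  have e: "(\<lambda>x. indicator A x *\<^sub>R (\<Sum>k\<in>K. f k x)) = (\<lambda>x. \<Sum>k\<in>K. indicator A x *\<^sub>R f k x)"
    by (simp add: scaleR_sum_right)
  show ?thesis
    using assms unfolding set_integrable_def set_lebesgue_integral_def e
    by (intro Bochner_Integration.integral_sum) auto
qed

lemma bilin_curve_moment:
  assumes integ: "\<And>\<alpha>. set_integrable lborel I (\<lambda>s. monev \<alpha> (cpt \<gamma> s) * w s)"
  shows "bilin D N (gram (curve_moment I \<gamma> w) D) p q =
    (LINT s:I|lborel. poly_eval D N p (cpt \<gamma> s) * poly_eval D N q (cpt \<gamma> s) * w s)"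
proof -
  let ?F = "\<lambda>i j s. p i * q j * (monev (madd (monomial D i) (monomial D j)) (cpt \<gamma> s) * w s)"
  have expand: "poly_eval D N p (cpt \<gamma> s) * poly_eval D N q (cpt \<gamma> s) * w s =
      (\<Sum>i\<in>block_index D N. \<Sum>j\<in>block_index D N. ?F i j s)" for s
  proof -
    have "poly_eval D N p (cpt \<gamma> s) * poly_eval D N q (cpt \<gamma> s) * w s =
        (\<Sum>i\<in>block_index D N. \<Sum>j\<in>block_index D N.
           p i * monev (monomial D i) (cpt \<gamma> s) * (q j * monev (monomial D j) (cpt \<gamma> s)) * w s)"
      unfolding poly_eval_def sum_product by (simp add: sum_distrib_right)
    also have "\<dots> = (\<Sum>i\<in>block_index D N. \<Sum>j\<in>block_index D N. ?F i j s)"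
      by (intro sum.cong refl) (simp add: monev_madd length_monomial)
    finally show ?thesis .
  qed
  have int: "set_integrable lborel I (?F i j)" for i j
    using integ by (simp add: mult.assoc)
  have int_row: "set_integrable lborel I (\<lambda>s. \<Sum>j\<in>block_index D N. ?F i j s)" for i
    by (rule set_integrable_sum) (auto intro: int)
  have "(LINT s:I|lborel. poly_eval D N p (cpt \<gamma> s) * poly_eval D N q (cpt \<gamma> s) * w s) =
      (\<Sum>i\<in>block_index D N. \<Sum>j\<in>block_index D N. LINT s:I|lborel. ?F i j s)"
    unfolding expand by (simp add: set_integral_sum int int_row)
  also have "\<dots> = bilin D N (gram (curve_moment I \<gamma> w) D) p q"
    unfolding bilin_def gram_def curve_moment_def
    by (intro sum.cong refl) (simp add: set_integral_mult_right ac_simps)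
  finally show ?thesis ..
qed

section \<open>Inverses and the last quasi-determinant\<close>

lemma mat_inv_carrier: "A \<in> carrier_mat k k \<Longrightarrow> mat_inv A \<in> carrier_mat k k"
  unfolding mat_inv_def using adj_mat(1)[of A k] by auto

lemma mat_inv_right:
  assumes A: "A \<in> carrier_mat k k" and d: "det A \<noteq> 0"
  shows "A * mat_inv A = 1\<^sub>m k"
proof -
  have "A * mat_inv A = (1 / det A) \<cdot>\<^sub>m (A * adj_mat A)"
    unfolding mat_inv_def using A adj_mat(1)[OF A] by (rule mult_smult_distrib)
  also have "\<dots> = 1\<^sub>m k" using adj_mat(2)[OF A] d by (intro eq_matI) auto
  finally show ?thesis .
qed

lemma mat_inv_right_entry:
  assumes A: "A \<in> carrier_mat k k" and "det A \<noteq> 0" and "c < k" "c' < k"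
  shows "(\<Sum>j<k. A $$ (c, j) * mat_inv A $$ (j, c')) = (if c = c' then 1 else 0)"
proof -
  have "(A * mat_inv A) $$ (c, c') = (\<Sum>j<k. A $$ (c, j) * mat_inv A $$ (j, c'))"
    using A mat_inv_carrier[OF A] assms(3,4) by (simp add: scalar_prod_def atLeast0LessThan)
  then show ?thesis using mat_inv_right[OF assms(1,2)] assms(3,4) by simp
qed

lemma Theta_star_eq_of_left_block_factor:
  fixes M :: "complex mat"
  assumes dims: "dim_row M = k + p" "dim_col M = k + q"
  defines "A \<equiv> mat k k (\<lambda>ij. M $$ ij)"
    and "B \<equiv> mat k q (\<lambda>(i, j). M $$ (i, j + k))"
    and "C \<equiv> mat p k (\<lambda>(i, j). M $$ (i + k, j))"
    and "E \<equiv> mat p q (\<lambda>(i, j). M $$ (i + k, j + k))"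
  assumes X: "X \<in> carrier_mat p k" and det: "det A \<noteq> 0" and C: "C = - (X * A)"
  shows "Theta_star M p q = E + X * B"
proof -
  have A: "A \<in> carrier_mat k k" and B: "B \<in> carrier_mat k q" and E: "E \<in> carrier_mat p q"
    unfolding A_def B_def E_def by simp_all
  have "C * mat_inv A = - (X * A * mat_inv A)"
    unfolding C using X A mat_inv_carrier[OF A] by (intro uminus_mult_left_mat) auto
  also have "X * A * mat_inv A = X"
    using X A mat_inv_carrier[OF A] mat_inv_right[OF A det] by (simp add: assoc_mult_mat)
  finally have "E - C * mat_inv A * B = E + X * B"
    using X B E by auto
  then show ?thesis
    unfolding Theta_star_def split_block_def Let_def dims A_def B_def C_def E_def by simp
qed

section \<open>Perturbation of a moment functional by a curve integral\<close>

locale curve_perturbation =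
  fixes D :: nat and mom :: "nat list \<Rightarrow> complex" and I :: "real set"
    and \<gamma> :: "real \<Rightarrow> nat \<Rightarrow> real" and w :: "real \<Rightarrow> complex"
    and S Sh :: "nat \<Rightarrow> nat \<Rightarrow> complex mat" and H Hh :: "nat \<Rightarrow> complex mat"
  assumes qd: "quasi_definite mom D"
    and fact: "block_LDL mom D S H"
    and integ: "\<And>\<alpha>. set_integrable lborel I (\<lambda>s. monev \<alpha> (cpt \<gamma> s) * w s)"
    and qdh: "quasi_definite (\<lambda>\<alpha>. mom \<alpha> + curve_moment I \<gamma> w \<alpha>) D"
    and facth: "block_LDL (\<lambda>\<alpha>. mom \<alpha> + curve_moment I \<gamma> w \<alpha>) D Sh Hh"
begin

abbreviation "Gu \<equiv> gram mom D"
abbreviation "Gv \<equiv> gram (curve_moment I \<gamma> w) D"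
abbreviation "Guh \<equiv> gram (\<lambda>\<alpha>. mom \<alpha> + curve_moment I \<gamma> w \<alpha>) D"

lemma H_carrier: "H m \<in> carrier_mat (bsz D m) (bsz D m)"
  using fact unfolding block_LDL_def by blast

lemma Hh_carrier: "Hh m \<in> carrier_mat (bsz D m) (bsz D m)"
  using facth unfolding block_LDL_def by blast

lemma unitriangular_S: "unitriangular D (Srow D S)"
  by (rule unitriangular_Srow[OF fact])

lemma unitriangular_Sh: "unitriangular D (Srow D Sh)"
  by (rule unitriangular_Srow[OF facth])

lemma bilin_Guh: "bilin D N Guh p q = bilin D N Gu p q + bilin D N Gv p q"
  unfolding gram_add by (rule bilin_add_form)

lemma bilin_Gv:
  "bilin D N Gv p q = (LINT s:I|lborel. poly_eval D N p (cpt \<gamma> s) * poly_eval D N q (cpt \<gamma> s) * w s)"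
  by (rule bilin_curve_moment[OF integ])

lemma det_H_nonzero: "det (H m) \<noteq> 0"
proof
  assume "det (H m) = 0"
  then obtain y where y: "y \<in> carrier_vec (bsz D m)" "y \<noteq> 0\<^sub>v (bsz D m)" "H m *\<^sub>v y = 0\<^sub>v (bsz D m)"
    using det_0_iff_vec_prod_zero_field[OF H_carrier] by blast
  define x where "x = (\<lambda>i. if fst i = m \<and> snd i < bsz D m then y $ snd i else 0)"
  have "bilin D (Suc m) Gu (Srow D S j) (lincomb D (Suc m) x (Srow D S)) = 0"
    if j: "j \<in> block_index D (Suc m)" for j
  proof -
    obtain k b where jj: "j = (k, b)" by fastforce
    with j have kb: "k \<le> m" "b < bsz D k" by auto
    have "bilin D (Suc m) Gu (Srow D S j) (lincomb D (Suc m) x (Srow D S)) =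
        (\<Sum>c<bsz D m. y $ c * bilin D (Suc m) Gu (Srow D S (k, b)) (Srow D S (m, c)))"
      unfolding bilin_lincomb_right sum_block_index_Suc jj
      by (simp add: x_def, intro sum.neutral) (auto simp: block_index_def)
    also have "\<dots> = (\<Sum>c<bsz D m. y $ c * (if k = m then H k $$ (b, c) else 0))"
      using kb by (intro sum.cong refl, subst block_LDL_bilin[OF fact]) auto
    also have "\<dots> = 0"
    proof (cases "k = m")
      case True
      have "(H m *\<^sub>v y) $ b = 0" using y(3) kb True by simp
      then show ?thesis
        using H_carrier[of m] y(1) kb True by (simp add: scalar_prod_def atLeast0LessThan mult.commute)
    qed simp
    finally show ?thesis .
  qed
  then have "x i = 0" if "i \<in> block_index D (Suc m)" for i
    using quasi_definite_orthogonal_lincomb[OF qd unitriangular_S order.refl _ that] by blast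
  then have "y $ c = 0" if "c < bsz D m" for c
    using that[unfolded x_def] by (metis fst_conv lessI mem_block_index snd_conv x_def)
  then have "y = 0\<^sub>v (bsz D m)" using y(1) by (intro eq_vecI) auto
  with y(2) show False by simp
qed

lemma Sh_row_orthogonal:
  assumes a: "a < bsz D n" and q: "supported D n q"
  shows "bilin D (Suc n) Guh (Srow D Sh (n, a)) q = 0"
proof (rule bilin_orthogonal_span_right[OF unitriangular_Sh q])
  fix j assume "j \<in> block_index D n"
  then show "bilin D (Suc n) Guh (Srow D Sh (n, a)) (Srow D Sh j) = 0"
    using a by (cases j) (simp add: block_LDL_bilin[OF facth])
qed

lemma Sh_row_expansion:
  obtains X where "\<forall>a<bsz D n. Srow D Sh (n, a) = (\<lambda>i. Srow D S (n, a) i + lincomb D n (X a) (Srow D S) i)"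
proof -
  have "\<exists>x. Srow D Sh (n, a) = (\<lambda>i. Srow D S (n, a) i + lincomb D n x (Srow D S) i)"
    if a: "a < bsz D n" for a
  proof -
    define d where "d = (\<lambda>i. Srow D Sh (n, a) i - Srow D S (n, a) i)"
    have "supported D n d" unfolding supported_def
    proof (intro allI impI)
      fix i assume nz: "d i \<noteq> 0"
      obtain j b where i: "i = (j, b)" by fastforce
      have jb: "j \<le> n" "b < bsz D j" using nz unfolding d_def i Srow_def by (auto split: if_splits)
      have "j \<noteq> n"
      proof
        assume "j = n"
        then have "d i = 0" using facth fact a jb unfolding d_def i Srow_def block_LDL_def by auto
        with nz show False by simp
      qed
      then show "i \<in> block_index D n" using jb i by simp
    qed
    then obtain x where "d = lincomb D n x (Srow D S)" using unitriangular_span[OF unitriangular_S] by blast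
    then have "Srow D Sh (n, a) = (\<lambda>i. Srow D S (n, a) i + lincomb D n x (Srow D S) i)"
      unfolding d_def by (metis diff_add_cancel add.commute)
    then show ?thesis by blast
  qed
  then show ?thesis using that by metis
qed

definition kernel_coeff :: "(nat \<Rightarrow> complex) \<Rightarrow> nat \<times> nat \<Rightarrow> complex" where
  "kernel_coeff x i = (\<Sum>c'<bsz D (fst i). mat_inv (H (fst i)) $$ (snd i, c') * Pb D S (fst i) x $$ (c', 0))"

lemma Kern_eq_poly_eval:
  "Kern D S H n y x = poly_eval D (Suc n) (lincomb D n (kernel_coeff x) (Srow D S)) y"
proof -
  have "(transpose_mat (Pb D S m y) * mat_inv (H m) * Pb D S m x) $$ (0, 0) =
      (\<Sum>c<bsz D m. kernel_coeff x (m, c) * Pb D S m y $$ (c, 0))" for m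
  proof -
    have "(transpose_mat (Pb D S m y) * mat_inv (H m) * Pb D S m x) $$ (0, 0) =
        (\<Sum>c'<bsz D m. (\<Sum>c<bsz D m. Pb D S m y $$ (c, 0) * mat_inv (H m) $$ (c, c')) * Pb D S m x $$ (c', 0))"
      using mat_inv_carrier[OF H_carrier, of m] by (simp add: scalar_prod_def atLeast0LessThan)
    also have "\<dots> = (\<Sum>c<bsz D m. kernel_coeff x (m, c) * Pb D S m y $$ (c, 0))"
      unfolding kernel_coeff_def
      by (simp add: sum_distrib_left sum_distrib_right ac_simps, subst sum.swap, simp add: ac_simps)
    finally show ?thesis .
  qed
  then have "Kern D S H n y x = (\<Sum>j\<in>block_index D n. kernel_coeff x j * Pb D S (fst j) y $$ (snd j, 0))"
    unfolding Kern_def sum_block_index by simp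
  also have "\<dots> = poly_eval D (Suc n) (lincomb D n (kernel_coeff x) (Srow D S)) y"
    unfolding poly_eval_lincomb
    by (intro sum.cong refl) (auto simp: block_index_def Pb_eq_poly_eval[where N = "Suc n"])
  finally show ?thesis .
qed

lemma bordered_entry_eq_bilin:
  assumes "k < Suc n" "a < bsz D k" "l < Suc n" "b < bsz D l"
  shows "(if k = l then H k $$ (a, b) else 0) +
      (LINT s:I|lborel. Pb D S k (cpt \<gamma> s) $$ (a, 0) * Pb D S l (cpt \<gamma> s) $$ (b, 0) * w s)
    = bilin D (Suc n) Guh (Srow D S (k, a)) (Srow D S (l, b))"
  using assms by (simp add: bilin_Guh bilin_Gv block_LDL_bilin[OF fact] Pb_eq_poly_eval[where N = "Suc n"])

context
  fixes n :: nat and X :: "nat \<Rightarrow> nat \<times> nat \<Rightarrow> complex"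
  assumes X: "\<forall>a<bsz D n. Srow D Sh (n, a) = (\<lambda>i. Srow D S (n, a) i + lincomb D n (X a) (Srow D S) i)"
begin

lemma Pb_Sh_expansion:
  assumes a: "a < bsz D n"
  shows "Pb D Sh n x $$ (a, 0) =
    Pb D S n x $$ (a, 0) + (\<Sum>j\<in>block_index D n. X a j * poly_eval D (Suc n) (Srow D S j) x)"
  using X a by (simp add: Pb_eq_poly_eval[where N = "Suc n"] poly_eval_add poly_eval_lincomb)

lemma correction_orthogonality:
  assumes a: "a < bsz D n" and j': "j' \<in> block_index D n"
  shows "bilin D (Suc n) Guh (Srow D S (n, a)) (Srow D S j') +
    (\<Sum>j\<in>block_index D n. X a j * bilin D (Suc n) Guh (Srow D S j) (Srow D S j')) = 0"
proof -
  have "bilin D (Suc n) Guh (Srow D Sh (n, a)) (Srow D S j') = 0"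
    using j' by (intro Sh_row_orthogonal a supported_Srow) (auto simp: block_index_def)
  then show ?thesis using X a by (simp add: bilin_add_left bilin_lincomb_left)
qed

lemma correction_times_H:
  assumes a: "a < bsz D n" and m: "m < n" and c': "c' < bsz D m"
  shows "(\<Sum>c<bsz D m. X a (m, c) * H m $$ (c, c')) =
    - bilin D (Suc n) Gv (Srow D Sh (n, a)) (Srow D S (m, c'))"
proof -
  have u_part: "bilin D (Suc n) Gu (Srow D Sh (n, a)) (Srow D S (m, c')) =
      (\<Sum>k<n. \<Sum>c<bsz D k. X a (k, c) * (if k = m then H k $$ (c, c') else 0))"
    using X a m c'
    by (simp add: bilin_add_left bilin_lincomb_left sum_block_index block_LDL_bilin[OF fact])
  have "bilin D (Suc n) Guh (Srow D Sh (n, a)) (Srow D S (m, c')) = 0"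
    using m by (intro Sh_row_orthogonal a supported_Srow) auto
  then have "bilin D (Suc n) Gu (Srow D Sh (n, a)) (Srow D S (m, c')) =
      - bilin D (Suc n) Gv (Srow D Sh (n, a)) (Srow D S (m, c'))"
    unfolding bilin_Guh by (simp add: eq_neg_iff_add_eq_0)
  moreover have "(\<Sum>k<n. \<Sum>c<bsz D k. X a (k, c) * (if k = m then H k $$ (c, c') else 0)) =
      (\<Sum>k<n. if k = m then (\<Sum>c<bsz D m. X a (m, c) * H m $$ (c, c')) else 0)"
    by (intro sum.cong refl) auto
  ultimately show ?thesis using u_part m by simp
qed

lemma correction_coeff:
  assumes a: "a < bsz D n" and m: "m < n" and c: "c < bsz D m"
  shows "X a (m, c) = - (\<Sum>c'<bsz D m.
    bilin D (Suc n) Gv (Srow D Sh (n, a)) (Srow D S (m, c')) * mat_inv (H m) $$ (c', c))"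
proof -
  have "X a (m, c) = (\<Sum>c''<bsz D m. X a (m, c'') * (\<Sum>c'<bsz D m. H m $$ (c'', c') * mat_inv (H m) $$ (c', c)))"
    using c by (simp add: mat_inv_right_entry[OF H_carrier det_H_nonzero] if_distrib cong: if_cong)
  also have "\<dots> = (\<Sum>c'<bsz D m. (\<Sum>c''<bsz D m. X a (m, c'') * H m $$ (c'', c')) * mat_inv (H m) $$ (c', c))"
    by (simp add: sum_distrib_left sum_distrib_right mult.assoc) (rule sum.swap)
  also have "\<dots> = - (\<Sum>c'<bsz D m.
      bilin D (Suc n) Gv (Srow D Sh (n, a)) (Srow D S (m, c')) * mat_inv (H m) $$ (c', c))"
    using a m by (simp add: correction_times_H sum_negf)
  finally show ?thesis .
qed

lemma perturbed_poly_kernel_formula: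
  "Pb D Sh n x = Pb D S n x - mat (bsz D n) 1 (\<lambda>(a, _). LINT s:I|lborel.
     Pb D Sh n (cpt \<gamma> s) $$ (a, 0) * Kern D S H n (cpt \<gamma> s) x * w s)"
proof (rule eq_matI)
  fix a j assume "a < dim_row (Pb D S n x - mat (bsz D n) 1 (\<lambda>(a, _). LINT s:I|lborel.
     Pb D Sh n (cpt \<gamma> s) $$ (a, 0) * Kern D S H n (cpt \<gamma> s) x * w s))"
    and "j < dim_col (Pb D S n x - mat (bsz D n) 1 (\<lambda>(a, _). LINT s:I|lborel.
     Pb D Sh n (cpt \<gamma> s) $$ (a, 0) * Kern D S H n (cpt \<gamma> s) x * w s))"
  then have a: "a < bsz D n" and j: "j = 0" by simp_all
  let ?J = "\<lambda>i. bilin D (Suc n) Gv (Srow D Sh (n, a)) (Srow D S i)"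
  let ?Hi = "\<lambda>m. mat_inv (H m)"
  have "(\<Sum>i\<in>block_index D n. X a i * poly_eval D (Suc n) (Srow D S i) x) =
      - (\<Sum>i\<in>block_index D n. ?J i * kernel_coeff x i)"
  proof -
    have "(\<Sum>c<bsz D m. (\<Sum>c'<bsz D m. ?J (m, c') * ?Hi m $$ (c', c)) * Pb D S m x $$ (c, 0)) =
        (\<Sum>c'<bsz D m. ?J (m, c') * kernel_coeff x (m, c'))" for m
      unfolding kernel_coeff_def
      by (simp add: sum_distrib_left sum_distrib_right mult.assoc) (rule sum.swap)
    then show ?thesis
      unfolding sum_block_index using a
      by (simp add: correction_coeff Pb_eq_poly_eval[where N = "Suc n", symmetric] sum_negf)
  qed
  also have "(\<Sum>i\<in>block_index D n. ?J i * kernel_coeff x i) =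
      bilin D (Suc n) Gv (Srow D Sh (n, a)) (lincomb D n (kernel_coeff x) (Srow D S))"
    by (simp add: bilin_lincomb_right mult.commute)
  also have "\<dots> = (LINT s:I|lborel. Pb D Sh n (cpt \<gamma> s) $$ (a, 0) * Kern D S H n (cpt \<gamma> s) x * w s)"
    unfolding bilin_Gv Kern_eq_poly_eval using a by (simp add: Pb_eq_poly_eval[where N = "Suc n"])
  finally show "Pb D Sh n x $$ (a, j) = (Pb D S n x - mat (bsz D n) 1 (\<lambda>(a, _). LINT s:I|lborel.
     Pb D Sh n (cpt \<gamma> s) $$ (a, 0) * Kern D S H n (cpt \<gamma> s) x * w s)) $$ (a, j)"
    using a j by (simp add: Pb_Sh_expansion)
qed simp_all

lemma perturbed_H_formula:
  "Hh n = H n + mat (bsz D n) (bsz D n)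
     (\<lambda>(a, b). LINT s:I|lborel. Pb D Sh n (cpt \<gamma> s) $$ (a, 0) * Pb D S n (cpt \<gamma> s) $$ (b, 0) * w s)"
proof (rule eq_matI)
  fix a b assume "a < dim_row (H n + mat (bsz D n) (bsz D n) (\<lambda>(a, b). LINT s:I|lborel.
       Pb D Sh n (cpt \<gamma> s) $$ (a, 0) * Pb D S n (cpt \<gamma> s) $$ (b, 0) * w s))"
    and "b < dim_col (H n + mat (bsz D n) (bsz D n) (\<lambda>(a, b). LINT s:I|lborel.
       Pb D Sh n (cpt \<gamma> s) $$ (a, 0) * Pb D S n (cpt \<gamma> s) $$ (b, 0) * w s))"
  then have a: "a < bsz D n" and b: "b < bsz D n" by simp_all
  have lower: "supported D n (lincomb D n y (Srow D S))" for y
    by (intro supported_lincomb supported_Srow) (auto simp: block_index_def)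
  have u_part: "bilin D (Suc n) Gu (Srow D Sh (n, a)) (Srow D S (n, b)) = H n $$ (a, b)"
    using X a b by (simp add: bilin_add_left bilin_lincomb_left block_LDL_bilin[OF fact] sum_block_index)
  have "Hh n $$ (a, b) = bilin D (Suc n) Guh (Srow D Sh (n, a)) (Srow D Sh (n, b))"
    using a b by (simp add: block_LDL_bilin[OF facth])
  also have "\<dots> = bilin D (Suc n) Guh (Srow D Sh (n, a)) (Srow D S (n, b))"
    using X b Sh_row_orthogonal[OF a lower] by (simp add: bilin_add_right)
  also have "\<dots> = H n $$ (a, b) + bilin D (Suc n) Gv (Srow D Sh (n, a)) (Srow D S (n, b))"
    unfolding bilin_Guh u_part ..
  finally show "Hh n $$ (a, b) = (H n + mat (bsz D n) (bsz D n) (\<lambda>(a, b). LINT s:I|lborel.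
       Pb D Sh n (cpt \<gamma> s) $$ (a, 0) * Pb D S n (cpt \<gamma> s) $$ (b, 0) * w s)) $$ (a, b)"
    using a b H_carrier[of n] by (simp add: bilin_Gv Pb_eq_poly_eval[where N = "Suc n"])
qed (use Hh_carrier[of n] H_carrier[of n] in auto)

lemma perturbed_poly_quasi_determinant:
  fixes t :: real
  defines "A \<equiv> \<lambda>l m. mat (bsz D l) (bsz D m) (\<lambda>(a, b).
      LINT s:I|lborel. Pb D S l (cpt \<gamma> s) $$ (a, 0) * Pb D S m (cpt \<gamma> s) $$ (b, 0) * w s)"
  defines "M \<equiv> mat (off D (Suc n)) (off D n + 1) (\<lambda>(r, c). case idx D (Suc n) ! r of (k, a) \<Rightarrow>
      (if c < off D n then
         (case idx D n ! c of (l, b) \<Rightarrow> (if k = l then H k $$ (a, b) else 0) + A k l $$ (a, b))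
       else Pb D S k (cpt \<gamma> t) $$ (a, 0)))"
  shows "Pb D Sh n (cpt \<gamma> t) = Theta_star M (bsz D n) 1"
proof -
  let ?o = "off D n" and ?b = "bsz D n" and ?ix = "idx D n" and ?iy = "idx D (Suc n)"
  let ?G = "\<lambda>i j. bilin D (Suc n) Guh (Srow D S i) (Srow D S j)"
  let ?ev = "\<lambda>i. poly_eval D (Suc n) (Srow D S i) (cpt \<gamma> t)"
  have iy: "?iy ! r \<in> block_index D (Suc n)" if "r < ?o + ?b" for r
    using that by (intro idx_in_block_index) (simp add: off_Suc)
  have M_gram: "M $$ (r, c) = ?G (?iy ! r) (?ix ! c)" if r: "r < ?o + ?b" and c: "c < ?o" for r c
  proof -
    obtain k a where ka: "?iy ! r = (k, a)" by fastforce
    obtain l b where lb: "?ix ! c = (l, b)" by fastforce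
    have "k < Suc n" "a < bsz D k" using iy[OF r] ka by auto
    moreover have "l < Suc n" "b < bsz D l" using idx_in_block_index[OF c] lb by auto
    ultimately show ?thesis
      using r c ka lb by (simp add: M_def A_def off_Suc bordered_entry_eq_bilin[symmetric])
  qed
  have M_eval: "M $$ (r, ?o) = ?ev (?iy ! r)" if r: "r < ?o + ?b" for r
  proof -
    obtain k a where ka: "?iy ! r = (k, a)" by fastforce
    have "k < Suc n" "a < bsz D k" using iy[OF r] ka by auto
    then show ?thesis
      using r ka by (simp add: M_def off_Suc Pb_eq_poly_eval[where N = "Suc n"])
  qed
  define Xm where "Xm = mat ?b ?o (\<lambda>(a, r). X a (?ix ! r))"
  have Xm: "Xm \<in> carrier_mat ?b ?o" unfolding Xm_def by simp
  have A: "mat ?o ?o (($$) M) = mat ?o ?o (\<lambda>(r, c). ?G (?ix ! r) (?ix ! c))"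
    by (rule eq_matI) (auto simp: M_gram idx_Suc_low)
  have "Theta_star M ?b 1 = mat ?b 1 (\<lambda>(i, j). M $$ (i + ?o, j + ?o)) + Xm * mat ?o 1 (\<lambda>(i, j). M $$ (i, j + ?o))"
  proof (rule Theta_star_eq_of_left_block_factor[OF _ _ Xm])
    show "det (mat ?o ?o (($$) M)) \<noteq> 0"
      unfolding A using det_gram_lincomb_nonzero[OF qdh unitriangular_S, of n "Suc n"] by simp
    show "mat ?b ?o (\<lambda>(i, j). M $$ (i + ?o, j)) = - (Xm * mat ?o ?o (($$) M))"
    proof (rule eq_matI)
      fix a c assume "a < dim_row (- (Xm * mat ?o ?o (($$) M)))" "c < dim_col (- (Xm * mat ?o ?o (($$) M)))"
      then have a: "a < ?b" and c: "c < ?o" using Xm by auto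
      have "(Xm * mat ?o ?o (($$) M)) $$ (a, c) = (\<Sum>r<?o. X a (?ix ! r) * ?G (?ix ! r) (?ix ! c))"
        using a c Xm by (simp add: A Xm_def scalar_prod_def atLeast0LessThan)
      also have "\<dots> = (\<Sum>j\<in>block_index D n. X a j * ?G j (?ix ! c))"
        by (rule sum_idx)
      also have "\<dots> = - ?G (n, a) (?ix ! c)"
        using correction_orthogonality[OF a idx_in_block_index[OF c]] by (simp add: eq_neg_iff_add_eq_0 add.commute)
      finally show "mat ?b ?o (\<lambda>(i, j). M $$ (i + ?o, j)) $$ (a, c) = (- (Xm * mat ?o ?o (($$) M))) $$ (a, c)"
        using a c Xm M_gram[of "a + ?o" c] idx_Suc_top[OF a] by (simp add: add.commute)
    qed (use Xm in auto)
  qed (simp_all add: M_def off_Suc)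
  also have "\<dots> = Pb D Sh n (cpt \<gamma> t)"
  proof (rule eq_matI)
    fix a j assume "a < dim_row (Pb D Sh n (cpt \<gamma> t))" "j < dim_col (Pb D Sh n (cpt \<gamma> t))"
    then have a: "a < ?b" and j: "j = 0" by simp_all
    have "(Xm * mat ?o 1 (\<lambda>(i, j). M $$ (i, j + ?o))) $$ (a, 0) = (\<Sum>r<?o. X a (?ix ! r) * ?ev (?ix ! r))"
      using a Xm by (simp add: Xm_def scalar_prod_def atLeast0LessThan M_eval idx_Suc_low)
    also have "\<dots> = (\<Sum>i\<in>block_index D n. X a i * ?ev i)"
      by (rule sum_idx)
    moreover have "M $$ (a + ?o, ?o) = Pb D S n (cpt \<gamma> t) $$ (a, 0)"
      using a M_eval[of "a + ?o"] idx_Suc_top[OF a] by (simp add: add.commute Pb_eq_poly_eval[where N = "Suc n"])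
    ultimately show "(mat ?b 1 (\<lambda>(i, j). M $$ (i + ?o, j + ?o)) + Xm * mat ?o 1 (\<lambda>(i, j). M $$ (i, j + ?o))) $$ (a, j)
        = Pb D Sh n (cpt \<gamma> t) $$ (a, j)"
      using a j Xm by (simp add: Pb_Sh_expansion)
  qed (use Xm in simp_all)
  finally show ?thesis ..
qed

end

end

theorem mainTheorem17:
  fixes D :: nat
    and mom :: "nat list \<Rightarrow> complex"
    and I :: "real set"
    and \<gamma> :: "real \<Rightarrow> nat \<Rightarrow> real"
    and w :: "real \<Rightarrow> complex"
    and S Sh :: "nat \<Rightarrow> nat \<Rightarrow> complex mat"
    and H Hh :: "nat \<Rightarrow> complex mat"
    and n :: nat
  assumes D: "D \<ge> 1"
    and qd: "quasi_definite mom D"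
    and fact: "block_LDL mom D S H"
    and I: "is_interval I"
    and smooth: "smooth_curve D I \<gamma>"
    and integ: "\<And>\<alpha>. set_integrable lborel I (\<lambda>s. monev \<alpha> (cpt \<gamma> s) * w s)"
    and qdh: "quasi_definite (\<lambda>\<alpha>. mom \<alpha> + (LINT s:I|lborel. monev \<alpha> (cpt \<gamma> s) * w s)) D"
    and facth: "block_LDL (\<lambda>\<alpha>. mom \<alpha> + (LINT s:I|lborel. monev \<alpha> (cpt \<gamma> s) * w s)) D Sh Hh"
    and n: "n \<ge> 1"
  shows
   "let \<pi> = (\<lambda>m t. Pb D S m (cpt \<gamma> t));
        \<pi>h = (\<lambda>m t. Pb D Sh m (cpt \<gamma> t));
        A = (\<lambda>l m. mat (bsz D l) (bsz D m)
               (\<lambda>(a, b). LINT s:I|lborel. \<pi> l s $$ (a, 0) * \<pi> m s $$ (b, 0) * w s));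
        M = (\<lambda>t. mat (off D (Suc n)) (off D n + 1)
               (\<lambda>(r, c). case idx D (Suc n) ! r of (k, a) \<Rightarrow>
                  (if c < off D n then
                     (case idx D n ! c of (l, b) \<Rightarrow>
                        (if k = l then H k $$ (a, b) else 0) + A k l $$ (a, b))
                   else \<pi> k t $$ (a, 0))))
    in (\<forall>t\<in>I. \<pi>h n t = Theta_star (M t) (bsz D n) 1)
     \<and> (\<forall>x. Pb D Sh n x = Pb D S n x
            - mat (bsz D n) 1 (\<lambda>(a, _). LINT s:I|lborel.
                 \<pi>h n s $$ (a, 0) * Kern D S H n (cpt \<gamma> s) x * w s))
     \<and> Hh n = H n + mat (bsz D n) (bsz D n)
            (\<lambda>(a, b). LINT s:I|lborel. \<pi>h n s $$ (a, 0) * \<pi> n s $$ (b, 0) * w s)"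
proof -
  interpret curve_perturbation D mom I \<gamma> w S Sh H Hh
    using qd fact integ qdh facth by unfold_locales (simp_all add: curve_moment_def)
  obtain X where X: "\<forall>a<bsz D n. Srow D Sh (n, a) = (\<lambda>i. Srow D S (n, a) i + lincomb D n (X a) (Srow D S) i)"
    using Sh_row_expansion by blast
  show ?thesis
    unfolding Let_def
    using perturbed_poly_quasi_determinant[OF X] perturbed_poly_kernel_formula[OF X] perturbed_H_formula[OF X]
    by blast
qed

end
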